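(* Let $\mathcal{H}$ be a Hilbert space, $\mathcal{H}_1$ a closed subspace with $\{0\}\ne\mathcal{H}_1\ne\mathcal{H}$, $P:\mathcal{H}\to\mathcal{H}_1$ the orthogonal projection onto $\mathcal{H}_1$, $Q:\mathcal{H}\to\mathcal{H}_1^\perp$ the orthogonal projection onto $\mathcal{H}_1^\perp$, $H\ge0$ a bounded selfadjoint operator on $\mathcal{H}$, $H_t:=H+tQ^*Q$, $\lambda_t:=\min\sigma(H_t)$ and $\lambda_\infty:=\min\sigma(PHP^* )$ (with $PHP^*$ regarded as an operator on $\mathcal{H}_1$). Then $\lambda_\infty\ge\lambda_t$ for all $t\ge0$, and for $t\ge2\|H+1\|^2$, $$\lambda_t\ge\lambda_\infty-\frac{4\|H+1\|^2(\lambda_\infty+1)^2}{t+1}\ge\lambda_\infty-\frac{4\|H+1\|^4}{t+1}.$$ *)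

theory Defs
  imports "HOL-Analysis.Analysis"
begin

text \<open>Real spectrum of an operator A restricted to an (invariant) subspace S:
  l is in the resolvent set iff A - l I is a bijection of S onto itself
  (for bounded operators on a closed subspace of a Hilbert space the inverse is
  then automatically bounded, by the open mapping theorem).\<close>
definition spectrum_on :: "'a::real_normed_vector set \<Rightarrow> ('a \<Rightarrow> 'a) \<Rightarrow> real set" where
  "spectrum_on S A = {l. \<not> bij_betw (\<lambda>x. A x - l *\<^sub>R x) S S}"

definition is_orth_proj :: "'a::real_inner set \<Rightarrow> ('a \<Rightarrow> 'a) \<Rightarrow> bool" where
  "is_orth_proj S P \<longleftrightarrow> (\<forall>x. P x \<in> S \<and> x - P x \<in> orthogonal_comp S)"

definition selfadjoint_op :: "('a::real_inner \<Rightarrow> 'a) \<Rightarrow> bool" where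
  "selfadjoint_op A \<longleftrightarrow> bounded_linear A \<and> (\<forall>x y. inner (A x) y = inner x (A y))"

end

theory Submission
  imports Defs
begin

text \<open>
  For a bounded operator A that is symmetric on a closed subspace S, the bottom of the spectrum
  of A on S is the infimum m of the numerical range: below m, A - l is coercive and hence
  bijective (Banach fixed point); at m it is not surjective, since a surjective symmetric
  operator is bounded below (Baire category) while A - m has vectors of norm one with
  arbitrarily small quadratic form.

  Since the quadratic forms of H + t Q*Q and P H P* agree on H1, this variational principle gives
  lambda_t \<le> lambda_infty. For the lower bound split x = u + v with u = P x, v = Q x; as u \<bottom> v the
  cross term \<langle>H u, v\<rangle> equals \<langle>(H + 1) u, v\<rangle>, so
  \<langle>H_t x, x\<rangle> \<ge> lambda_infty |u|^2 - 2 N |u| |v| + t |v|^2 with N = \<parallel>H + 1\<parallel>, and minimizing this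
  2 \<times> 2 form gives lambda_t \<ge> lambda_infty - N^2 / (t - lambda_infty). The stated bounds follow
  from 0 \<le> lambda_infty \<le> N - 1 and t \<ge> 2 N^2.
\<close>

lemma quadratic_nonneg_imp_discriminant_le:
  fixes a b c :: real
  assumes nonneg: "\<And>s. 0 \<le> a + 2 * s * b + s\<^sup>2 * c" and "c \<ge> 0"
  shows "b\<^sup>2 \<le> a * c"
proof (cases "c = 0")
  case True
  show ?thesis
  proof (cases "b = 0")
    case False
    have "0 \<le> a + 2 * (- (a + 1) / (2 * b)) * b + (- (a + 1) / (2 * b))\<^sup>2 * c" by (rule nonneg)
    with False True show ?thesis by (simp add: field_simps)
  qed (use True in simp)
next
  case False
  then have c: "c > 0" using \<open>c \<ge> 0\<close> by simp
  have "0 \<le> a + 2 * (- b / c) * b + (- b / c)\<^sup>2 * c" by (rule nonneg)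
  then have "b\<^sup>2 / c \<le> a" using c by (simp add: field_simps power2_eq_square)
  then show ?thesis using c by (simp add: divide_le_eq mult.commute)
qed

lemma coercive_contraction:
  fixes T :: "'a::real_inner \<Rightarrow> 'a"
  assumes T: "bounded_linear T" and d: "d > 0"
    and coercive: "\<And>x. x \<in> S \<Longrightarrow> d * (norm x)\<^sup>2 \<le> inner (T x) x"
  obtains c q where "c \<noteq> 0" "0 \<le> q" "q < 1"
    "\<forall>w\<in>S. (norm (w - c *\<^sub>R T w))\<^sup>2 \<le> q * (norm w)\<^sup>2"
proof -
  interpret T: bounded_linear T by fact
  obtain K0 where K0: "\<And>x. norm (T x) \<le> norm x * K0" "K0 > 0" using T.pos_bounded by blast
  define K where "K = K0 + d"
  have K: "norm (T x) \<le> norm x * K" for x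
    using K0(1)[of x] mult_left_mono[of K0 K "norm x"] d unfolding K_def by simp
  have "d < K" using K0 unfolding K_def by simp
  define c where "c = d / K\<^sup>2"
  define q where "q = 1 - d\<^sup>2 / K\<^sup>2"
  have "d\<^sup>2 < K\<^sup>2" using \<open>d < K\<close> d by (intro power_strict_mono) auto
  then have "0 \<le> q" "q < 1" using \<open>d < K\<close> d unfolding q_def by auto
  moreover have "c > 0" using d \<open>d < K\<close> unfolding c_def by simp
  moreover have "(norm (w - c *\<^sub>R T w))\<^sup>2 \<le> q * (norm w)\<^sup>2" if "w \<in> S" for w
  proof -
    have "(norm (w - c *\<^sub>R T w))\<^sup>2 = (norm w)\<^sup>2 - 2 * c * inner (T w) w + c\<^sup>2 * (norm (T w))\<^sup>2"
      by (simp only: power2_norm_eq_inner inner_diff_left inner_diff_right inner_scaleR_left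
          inner_scaleR_right inner_commute[of w "T w"]) (simp add: power2_eq_square algebra_simps)
    also have "\<dots> \<le> (norm w)\<^sup>2 - 2 * c * (d * (norm w)\<^sup>2) + c\<^sup>2 * (norm w * K)\<^sup>2"
    proof -
      have "c * (d * (norm w)\<^sup>2) \<le> c * inner (T w) w"
        using coercive[OF that] \<open>c > 0\<close> by (intro mult_left_mono) auto
      moreover have "c\<^sup>2 * (norm (T w))\<^sup>2 \<le> c\<^sup>2 * (norm w * K)\<^sup>2"
        using K by (intro mult_left_mono power_mono) auto
      ultimately show ?thesis by linarith
    qed
    also have "\<dots> = q * (norm w)\<^sup>2" using \<open>d < K\<close> d unfolding c_def q_def
      by (simp add: field_simps power2_eq_square)
    finally show ?thesis .
  qed
  ultimately show thesis by (intro that[of c q]) auto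
qed

lemma coercive_imp_bij_betw:
  fixes S :: "'a::{real_inner,complete_space} set"
  assumes closed: "closed S" and sub: "subspace S" and T: "bounded_linear T"
    and TS: "\<And>x. x \<in> S \<Longrightarrow> T x \<in> S" and d: "d > 0"
    and coercive: "\<And>x. x \<in> S \<Longrightarrow> d * (norm x)\<^sup>2 \<le> inner (T x) x"
  shows "bij_betw T S S"
proof -
  interpret T: bounded_linear T by fact
  have "inj_on T S"
  proof (rule inj_onI)
    fix x y assume "x \<in> S" "y \<in> S" "T x = T y"
    then have "x - y \<in> S" "T (x - y) = 0" using sub by (auto simp: subspace_diff T.diff)
    then have "d * (norm (x - y))\<^sup>2 \<le> 0" using coercive by fastforce
    then show "x = y" using d by (simp add: mult_le_0_iff)
  qed
  moreover obtain c q where c: "c \<noteq> 0" and q: "0 \<le> q" "q < 1"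
    and contraction: "\<forall>w\<in>S. (norm (w - c *\<^sub>R T w))\<^sup>2 \<le> q * (norm w)\<^sup>2"
    using T d coercive by (rule coercive_contraction)
  have "S \<subseteq> T ` S"
  proof
    fix y assume y: "y \<in> S"
    define G where "G x = x - c *\<^sub>R (T x - y)" for x
    have "\<exists>!x\<in>S. G x = x"
    proof (rule Banach_fix)
      show "complete S" using closed by (simp add: complete_eq_closed)
      show "S \<noteq> {}" using sub subspace_0 by blast
      show "0 \<le> sqrt q" "sqrt q < 1" using q by simp_all
      show "G ` S \<subseteq> S" unfolding G_def using sub TS y
        by (auto intro!: subspace_diff subspace_scale)
      fix x z assume "x \<in> S" "z \<in> S"
      then have "x - z \<in> S" using sub by (simp add: subspace_diff)
      moreover have "G x - G z = (x - z) - c *\<^sub>R T (x - z)"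
        unfolding G_def by (simp add: T.diff algebra_simps)
      ultimately have "(norm (G x - G z))\<^sup>2 \<le> q * (norm (x - z))\<^sup>2" using contraction by simp
      then have "sqrt ((norm (G x - G z))\<^sup>2) \<le> sqrt (q * (norm (x - z))\<^sup>2)"
        using real_sqrt_le_mono by blast
      then show "dist (G x) (G z) \<le> sqrt q * dist x z"
        by (simp add: dist_norm real_sqrt_mult)
    qed
    then obtain x where "x \<in> S" "G x = x" by blast
    with c show "y \<in> T ` S" unfolding G_def by force
  qed
  ultimately show ?thesis using TS by (auto simp: bij_betw_def)
qed

definition numerical_range :: "'a::real_inner set \<Rightarrow> ('a \<Rightarrow> 'a) \<Rightarrow> real set" where
  "numerical_range S A = {inner (A x) x | x. x \<in> S \<and> norm x = 1}"

locale symmetric_operator_on =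
  fixes S :: "'a::{real_inner,complete_space} set" and A :: "'a \<Rightarrow> 'a"
  assumes closed_S: "closed S" and subspace_S: "subspace S"
    and bounded_linear_A: "bounded_linear A"
    and A_maps_into: "\<And>x. x \<in> S \<Longrightarrow> A x \<in> S"
    and A_symmetric: "\<And>x y. x \<in> S \<Longrightarrow> y \<in> S \<Longrightarrow> inner (A x) y = inner x (A y)"
begin

interpretation A: bounded_linear A by (fact bounded_linear_A)

lemma shift: "symmetric_operator_on S (\<lambda>x. A x - l *\<^sub>R x)"
proof (rule symmetric_operator_on.intro)
  show "bounded_linear (\<lambda>x. A x - l *\<^sub>R x)"
    by (intro bounded_linear_sub bounded_linear_scaleR_right bounded_linear_ident bounded_linear_A)
  show "A x - l *\<^sub>R x \<in> S" if "x \<in> S" for x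
    using that A_maps_into subspace_S by (simp add: subspace_diff subspace_scale)
  show "inner (A x - l *\<^sub>R x) y = inner x (A y - l *\<^sub>R y)" if "x \<in> S" "y \<in> S" for x y
    using A_symmetric[OF that] by (simp add: inner_diff_left inner_diff_right inner_commute)
qed (fact closed_S subspace_S)+

lemma quadratic_form_Cauchy_Schwarz:
  assumes nonneg: "\<And>x. x \<in> S \<Longrightarrow> 0 \<le> inner (A x) x" and x: "x \<in> S" and y: "y \<in> S"
  shows "(inner (A x) y)\<^sup>2 \<le> inner (A x) x * inner (A y) y"
proof (rule quadratic_nonneg_imp_discriminant_le[OF _ nonneg[OF y]])
  fix s :: real
  have "0 \<le> inner (A (x + s *\<^sub>R y)) (x + s *\<^sub>R y)"
    using x y subspace_S by (intro nonneg subspace_add subspace_scale)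
  also have "\<dots> = inner (A x) x + s * inner (A x) y + s * inner (A y) x + s\<^sup>2 * inner (A y) y"
    by (simp add: A.add A.scaleR inner_add_left inner_add_right power2_eq_square algebra_simps)
  also have "inner (A y) x = inner (A x) y" using A_symmetric[OF y x] by (simp add: inner_commute)
  finally show "0 \<le> inner (A x) x + 2 * s * inner (A x) y + s\<^sup>2 * inner (A y) y" by simp
qed

lemma norm_square_le_quadratic_form:
  assumes nonneg: "\<And>x. x \<in> S \<Longrightarrow> 0 \<le> inner (A x) x"
  obtains K where "K > 0" "\<forall>x\<in>S. (norm (A x))\<^sup>2 \<le> K * inner (A x) x"
proof -
  obtain K where K: "\<And>x. norm (A x) \<le> norm x * K" "K > 0" using A.pos_bounded by blast
  have "(norm (A x))\<^sup>2 \<le> K * inner (A x) x" if x: "x \<in> S" for x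
  proof -
    define z where "z = A x"
    have z: "z \<in> S" using A_maps_into x unfolding z_def by simp
    have "(norm z)\<^sup>2 * (norm z)\<^sup>2 = (inner (A x) z)\<^sup>2"
      by (simp only: z_def power2_norm_eq_inner) (simp add: power2_eq_square)
    also have "\<dots> \<le> inner (A x) x * inner (A z) z"
      using nonneg x z by (rule quadratic_form_Cauchy_Schwarz)
    also have "\<dots> \<le> inner (A x) x * (K * (norm z)\<^sup>2)"
    proof (rule mult_left_mono[OF _ nonneg[OF x]])
      have "inner (A z) z \<le> norm (A z) * norm z" by (rule norm_cauchy_schwarz)
      also have "\<dots> \<le> norm z * K * norm z" using K(1)[of z] by (intro mult_right_mono) auto
      finally show "inner (A z) z \<le> K * (norm z)\<^sup>2" by (simp add: power2_eq_square algebra_simps)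
    qed
    finally have bound: "(norm z)\<^sup>2 * (norm z)\<^sup>2 \<le> (K * inner (A x) x) * (norm z)\<^sup>2"
      by (simp add: algebra_simps)
    have "(norm z)\<^sup>2 \<le> K * inner (A x) x"
    proof (cases "z = 0")
      case False
      show ?thesis by (rule mult_right_le_imp_le[OF bound]) (simp add: False)
    qed (use K nonneg[OF x] in simp)
    then show ?thesis unfolding z_def .
  qed
  with K show thesis by (intro that) auto
qed

lemma surj_imp_inner_le_norm:
  assumes "A ` S = S" and "y \<in> S"
  shows "\<exists>k::nat. \<forall>x\<in>S. inner x y \<le> k * norm (A x)"
proof -
  obtain u where u: "u \<in> S" "y = A u" using assms by blast
  have "inner x y \<le> real (nat \<lceil>norm u\<rceil>) * norm (A x)" if x: "x \<in> S" for x
  proof -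
    have "inner x y = inner u (A x)" using A_symmetric[OF u(1) x] u(2) by (simp add: inner_commute)
    also have "\<dots> \<le> norm u * norm (A x)" by (rule norm_cauchy_schwarz)
    also have "\<dots> \<le> real (nat \<lceil>norm u\<rceil>) * norm (A x)"
      by (intro mult_right_mono) (auto simp: real_nat_ceiling_ge)
    finally show ?thesis .
  qed
  then show ?thesis by blast
qed

text \<open>Uniform boundedness by Baire category: the pointwise bounds of the previous lemma hold
  with a common constant on a ball of S.\<close>

lemma surj_imp_uniform_bound_near_point:
  assumes surj: "A ` S = S"
  obtains y0 r k where "y0 \<in> S" "r > 0" "k \<ge> 0"
    "\<forall>x\<in>S. \<forall>y\<in>S. dist y y0 < r \<longrightarrow> inner x y \<le> k * norm (A x)"
proof -
  define F where "F k = {y\<in>S. \<forall>x\<in>S. inner x y \<le> real k * norm (A x)}" for k :: nat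
  have closedin_F: "closedin (top_of_set S) (F k)" for k
  proof -
    have "F k = S \<inter> (\<Inter>x\<in>S. {y. inner x y \<le> real k * norm (A x)})" unfolding F_def by auto
    moreover have "closed (S \<inter> (\<Inter>x\<in>S. {y. inner x y \<le> real k * norm (A x)}))"
      using closed_S by (intro closed_Int closed_INT ballI closed_halfspace_le) auto
    ultimately show ?thesis by (simp add: closed_subset)
  qed
  have F_cover: "\<Union> (range F) = S"
    using surj_imp_inner_le_norm[OF surj] by (auto simp: F_def)
  have "completely_metrizable_space (top_of_set S)"
    by (rule completely_metrizable_space_closedin[OF completely_metrizable_space_euclidean])
      (simp add: closed_closedin[symmetric] closed_S)
  moreover have "top_of_set S interior_of S = S"
    using interior_of_topspace[of "top_of_set S"] by simp
  ultimately have "\<exists>k. top_of_set S interior_of F k \<noteq> {}"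
    using Baire_category_alt[of "top_of_set S" "range F"] closedin_F subspace_0[OF subspace_S]
    unfolding F_cover by auto
  then obtain k y0 where y0: "y0 \<in> top_of_set S interior_of F k" by blast
  moreover have "openin (top_of_set S) (top_of_set S interior_of F k)" by (rule openin_interior_of)
  ultimately obtain r where r: "r > 0" "\<And>y. y \<in> S \<Longrightarrow> dist y y0 < r \<Longrightarrow> y \<in> F k"
    using interior_of_subset[of "top_of_set S" "F k"] unfolding openin_euclidean_subtopology_iff
    by blast
  moreover have "y0 \<in> S" using y0 interior_of_subset[of "top_of_set S" "F k"] by (auto simp: F_def)
  ultimately show thesis by (intro that[of y0 r "real k"]) (auto simp: F_def)
qed

lemma surj_imp_bounded_below_on_sphere:
  assumes "A ` S = S"
  obtains c where "c > 0" "\<forall>x\<in>S. norm x = 1 \<longrightarrow> c \<le> norm (A x)"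
proof -
  obtain y0 r k where y0: "y0 \<in> S" and r: "r > 0" and k: "k \<ge> 0"
    and bound: "\<forall>x\<in>S. \<forall>y\<in>S. dist y y0 < r \<longrightarrow> inner x y \<le> k * norm (A x)"
    by (rule surj_imp_uniform_bound_near_point[OF assms])
  have "r / (4 * (k + 1)) \<le> norm (A x)" if x: "x \<in> S" "norm x = 1" for x
  proof -
    have "y0 + (r / 2) *\<^sub>R x \<in> S" using y0 x subspace_S by (simp add: subspace_add subspace_scale)
    then have "inner x (y0 + (r / 2) *\<^sub>R x) \<le> k * norm (A x)"
      using x r bound by (auto simp: dist_norm)
    moreover have "- x \<in> S" using subspace_S x(1) by (rule subspace_neg)
    then have "inner (- x) y0 \<le> k * norm (A (- x))" using bound y0 r by force
    moreover have "inner x x = 1" using x by (simp add: power2_norm_eq_inner[symmetric])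
    ultimately have "r / 2 \<le> 2 * k * norm (A x)" by (simp add: inner_add_right A.neg)
    also have "\<dots> \<le> 2 * (k + 1) * norm (A x)" by (intro mult_right_mono) auto
    finally show ?thesis using k by (simp add: field_simps)
  qed
  with r k show thesis by (intro that[of "r / (4 * (k + 1))"]) auto
qed

lemma not_surj_if_degenerate:
  assumes nonneg: "\<And>x. x \<in> S \<Longrightarrow> 0 \<le> inner (A x) x"
    and degenerate: "\<And>e. e > 0 \<Longrightarrow> \<exists>x\<in>S. norm x = 1 \<and> inner (A x) x < e"
  shows "A ` S \<noteq> S"
proof
  assume "A ` S = S"
  then obtain c where c: "c > 0" "\<forall>x\<in>S. norm x = 1 \<longrightarrow> c \<le> norm (A x)"
    by (rule surj_imp_bounded_below_on_sphere)
  obtain K where K: "K > 0" "\<forall>x\<in>S. (norm (A x))\<^sup>2 \<le> K * inner (A x) x"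
    using nonneg by (rule norm_square_le_quadratic_form)
  obtain x where x: "x \<in> S" "norm x = 1" "inner (A x) x < c\<^sup>2 / K"
    using degenerate[of "c\<^sup>2 / K"] c K by auto
  have "c\<^sup>2 \<le> (norm (A x))\<^sup>2" using c x by (intro power_mono) auto
  also have "\<dots> \<le> K * inner (A x) x" using K x by blast
  also have "\<dots> < c\<^sup>2" using x K by (simp add: field_simps)
  finally show False by simp
qed

lemma numerical_range_nonempty:
  assumes "S \<noteq> {0}"
  shows "numerical_range S A \<noteq> {}"
proof -
  obtain x where x: "x \<in> S" "x \<noteq> 0" using assms subspace_0[OF subspace_S] by blast
  then have "(1 / norm x) *\<^sub>R x \<in> S" "norm ((1 / norm x) *\<^sub>R x) = 1"
    using subspace_S by (auto simp: subspace_scale)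
  then show ?thesis unfolding numerical_range_def by blast
qed

lemma bdd_below_numerical_range: "bdd_below (numerical_range S A)"
proof -
  obtain K where K: "\<And>x. norm (A x) \<le> norm x * K" using A.bounded by blast
  have "- K \<le> inner (A x) x" if "norm x = 1" for x
  proof -
    have "\<bar>inner (A x) x\<bar> \<le> norm (A x) * norm x" by (rule Cauchy_Schwarz_ineq2)
    also have "\<dots> \<le> K" using K[of x] that by simp
    finally show ?thesis by linarith
  qed
  then show ?thesis unfolding numerical_range_def by (intro bdd_belowI[of _ "- K"]) auto
qed

lemma Inf_numerical_range_le_quadratic_form:
  assumes "S \<noteq> {0}" and x: "x \<in> S"
  shows "Inf (numerical_range S A) * (norm x)\<^sup>2 \<le> inner (A x) x"
proof (cases "x = 0")
  case False
  define u where "u = (1 / norm x) *\<^sub>R x"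
  have "u \<in> S" "norm u = 1" using x False subspace_S by (auto simp: u_def subspace_scale)
  then have "Inf (numerical_range S A) \<le> inner (A u) u"
    using bdd_below_numerical_range by (intro cInf_lower) (auto simp: numerical_range_def)
  also have "inner (A u) u = inner (A x) x / (norm x)\<^sup>2"
    by (simp add: u_def A.scaleR power2_eq_square)
  finally show ?thesis using False by (simp add: le_divide_eq)
qed (simp add: A.zero)

lemma not_in_spectrum_on_below_numerical_range:
  assumes "S \<noteq> {0}" and "l < Inf (numerical_range S A)"
  shows "l \<notin> spectrum_on S A"
proof -
  interpret shifted: symmetric_operator_on S "\<lambda>x. A x - l *\<^sub>R x" by (rule shift)
  have "bij_betw (\<lambda>x. A x - l *\<^sub>R x) S S"
  proof (rule coercive_imp_bij_betw[OF closed_S subspace_S shifted.bounded_linear_A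
        shifted.A_maps_into])
    show "Inf (numerical_range S A) - l > 0" using assms(2) by simp
    show "(Inf (numerical_range S A) - l) * (norm x)\<^sup>2 \<le> inner (A x - l *\<^sub>R x) x" if "x \<in> S" for x
      using Inf_numerical_range_le_quadratic_form[OF assms(1) that]
      by (simp add: inner_diff_left power2_norm_eq_inner algebra_simps)
  qed
  then show ?thesis unfolding spectrum_on_def by simp
qed

lemma Inf_numerical_range_in_spectrum_on:
  assumes nontrivial: "S \<noteq> {0}"
  shows "Inf (numerical_range S A) \<in> spectrum_on S A"
proof -
  define m where "m = Inf (numerical_range S A)"
  interpret shifted: symmetric_operator_on S "\<lambda>x. A x - m *\<^sub>R x" by (rule shift)
  have shifted_form: "inner (A x - m *\<^sub>R x) x = inner (A x) x - m * (norm x)\<^sup>2" for x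
    by (simp add: inner_diff_left power2_norm_eq_inner)
  have "(\<lambda>x. A x - m *\<^sub>R x) ` S \<noteq> S"
  proof (rule shifted.not_surj_if_degenerate)
    show "0 \<le> inner (A x - m *\<^sub>R x) x" if "x \<in> S" for x
      using Inf_numerical_range_le_quadratic_form[OF nontrivial that, folded m_def]
      unfolding shifted_form by simp
    show "\<exists>x\<in>S. norm x = 1 \<and> inner (A x - m *\<^sub>R x) x < e" if "e > 0" for e
    proof -
      have "Inf (numerical_range S A) < m + e" using that by (simp add: m_def)
      then obtain x where "x \<in> S" "norm x = 1" "inner (A x) x < m + e"
        using cInf_lessD[OF numerical_range_nonempty[OF nontrivial]]
        unfolding numerical_range_def by blast
      then show ?thesis unfolding shifted_form by (intro bexI[of _ x]) auto
    qed
  qed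
  then show ?thesis unfolding spectrum_on_def m_def by (auto simp: bij_betw_def)
qed

lemma Inf_spectrum_on_eq_Inf_numerical_range:
  assumes "S \<noteq> {0}"
  shows "Inf (spectrum_on S A) = Inf (numerical_range S A)"
  using Inf_numerical_range_in_spectrum_on[OF assms] not_in_spectrum_on_below_numerical_range[OF assms]
  by (intro cInf_eq_minimum) (auto simp: not_less[symmetric])

lemma Inf_spectrum_on_le_quadratic_form:
  assumes "S \<noteq> {0}" and "x \<in> S"
  shows "Inf (spectrum_on S A) * (norm x)\<^sup>2 \<le> inner (A x) x"
  using Inf_numerical_range_le_quadratic_form[OF assms]
  by (simp add: Inf_spectrum_on_eq_Inf_numerical_range[OF assms(1)])

lemma le_Inf_spectrum_on:
  assumes nontrivial: "S \<noteq> {0}"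
    and lower: "\<And>x. x \<in> S \<Longrightarrow> \<mu> * (norm x)\<^sup>2 \<le> inner (A x) x"
  shows "\<mu> \<le> Inf (spectrum_on S A)"
  unfolding Inf_spectrum_on_eq_Inf_numerical_range[OF nontrivial]
proof (rule cInf_greatest[OF numerical_range_nonempty[OF nontrivial]])
  fix r assume "r \<in> numerical_range S A"
  then obtain x where "x \<in> S" "norm x = 1" "r = inner (A x) x"
    unfolding numerical_range_def by blast
  then show "\<mu> \<le> r" using lower[of x] by simp
qed

end

lemma orthogonal_comp_self_eq_0: "x \<in> U \<Longrightarrow> x \<in> orthogonal_comp U \<Longrightarrow> x = 0"
  by (auto simp: orthogonal_comp_def orthogonal_def)

context
  fixes S :: "'a::real_inner set" and P :: "'a \<Rightarrow> 'a"
  assumes subspace_S: "subspace S" and orth_proj: "is_orth_proj S P"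
begin

lemma orth_proj_in: "P x \<in> S"
  using orth_proj by (simp add: is_orth_proj_def)

lemma orth_proj_residual: "x - P x \<in> orthogonal_comp S"
  using orth_proj by (simp add: is_orth_proj_def)

lemma orth_proj_unique:
  assumes "u \<in> S" and "x - u \<in> orthogonal_comp S"
  shows "P x = u"
proof -
  have "P x - u \<in> S" using assms(1) orth_proj_in subspace_S by (simp add: subspace_diff)
  moreover have "P x - u = (x - u) - (x - P x)" by simp
  then have "P x - u \<in> orthogonal_comp S"
    using assms(2) orth_proj_residual by (metis subspace_diff subspace_orthogonal_comp)
  ultimately show ?thesis using orthogonal_comp_self_eq_0 by fastforce
qed

lemma orth_proj_fixes: "x \<in> S \<Longrightarrow> P x = x"
  by (rule orth_proj_unique) (simp_all add: subspace_0 subspace_orthogonal_comp)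

lemma orth_proj_inner: "y \<in> S \<Longrightarrow> inner (P x) y = inner x y"
  using orth_proj_residual[of x]
  by (auto simp: orthogonal_comp_def orthogonal_def inner_diff_right inner_commute)

lemma orth_proj_symmetric: "inner (P x) y = inner x (P y)"
  using orth_proj_inner[OF orth_proj_in, of x y] orth_proj_inner[OF orth_proj_in, of y x]
  by (simp add: inner_commute)

lemma bounded_linear_orth_proj: "bounded_linear P"
proof (rule bounded_linear_intro)
  show "P (x + y) = P x + P y" for x y
  proof (rule orth_proj_unique)
    show "P x + P y \<in> S" using orth_proj_in subspace_S by (simp add: subspace_add)
    have "x + y - (P x + P y) = (x - P x) + (y - P y)" by simp
    then show "x + y - (P x + P y) \<in> orthogonal_comp S"
      using orth_proj_residual subspace_orthogonal_comp by (metis subspace_add)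
  qed
  show "P (r *\<^sub>R x) = r *\<^sub>R P x" for r x
  proof (rule orth_proj_unique)
    show "r *\<^sub>R P x \<in> S" using orth_proj_in subspace_S by (simp add: subspace_scale)
    show "r *\<^sub>R x - r *\<^sub>R P x \<in> orthogonal_comp S"
      using orth_proj_residual subspace_orthogonal_comp
      by (metis scaleR_right_diff_distrib subspace_scale)
  qed
  show "norm (P x) \<le> norm x * 1" for x
  proof -
    have "(norm (P x))\<^sup>2 = inner x (P x)"
      using orth_proj_inner[OF orth_proj_in, of x x] by (simp add: power2_norm_eq_inner)
    also have "\<dots> \<le> norm x * norm (P x)" by (rule norm_cauchy_schwarz)
    finally show ?thesis
      by (cases "P x = 0") (auto simp: power2_eq_square mult_le_cancel_right)
  qed
qed

end

lemma orth_proj_orthogonal_comp: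
  assumes "subspace S" "is_orth_proj S P" "is_orth_proj (orthogonal_comp S) Q"
  shows "Q x = x - P x"
proof (rule orth_proj_unique[OF subspace_orthogonal_comp assms(3)])
  show "x - P x \<in> orthogonal_comp S" using assms(1,2) by (rule orth_proj_residual)
  show "x - (x - P x) \<in> orthogonal_comp (orthogonal_comp S)"
    using orth_proj_in[OF assms(1,2)] orthogonal_comp_subset by auto
qed

lemma quadratic_form_2x2_lower_bound:
  fixes L N a b d :: real
  assumes "d > 0"
  shows "(L - N\<^sup>2 / d) * (a\<^sup>2 + b\<^sup>2) \<le> L * a\<^sup>2 - 2 * N * a * b + (L + d) * b\<^sup>2"
proof -
  have "L * a\<^sup>2 - 2 * N * a * b + (L + d) * b\<^sup>2 - (L - N\<^sup>2 / d) * (a\<^sup>2 + b\<^sup>2)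
      = ((N * a - d * b)\<^sup>2 + N\<^sup>2 * b\<^sup>2) / d"
    using assms by (simp add: field_simps power2_eq_square)
  moreover have "((N * a - d * b)\<^sup>2 + N\<^sup>2 * b\<^sup>2) / d \<ge> 0" using assms by simp
  ultimately show ?thesis by linarith
qed

lemma penalty_error_estimates:
  fixes L N t :: real
  assumes L: "L \<ge> 0" and LN: "L + 1 \<le> N" and t: "t \<ge> 2 * N\<^sup>2"
  shows "t - L > 0" "N\<^sup>2 / (t - L) \<le> 4 * N\<^sup>2 * (L + 1)\<^sup>2 / (t + 1)"
    "4 * N\<^sup>2 * (L + 1)\<^sup>2 / (t + 1) \<le> 4 * N ^ 4 / (t + 1)"
proof -
  define M where "M = L + 1"
  have M: "1 \<le> M" "M \<le> N" using L LN unfolding M_def by auto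
  have MN: "M\<^sup>2 \<le> N\<^sup>2" using M by (intro power_mono) auto
  moreover have "M \<le> M\<^sup>2" using M by (simp add: power2_eq_square)
  ultimately have tM: "t \<ge> 2 * M" using t by linarith
  show tL: "t - L > 0" using tM M unfolding M_def by simp
  have "t + 1 \<le> 4 * (t - L)" using tM L unfolding M_def by simp
  also have "\<dots> \<le> 4 * M\<^sup>2 * (t - L)"
    using M tL by (intro mult_right_mono) (auto simp: one_le_power)
  finally have "N\<^sup>2 * (t + 1) \<le> N\<^sup>2 * (4 * M\<^sup>2 * (t - L))" by (intro mult_left_mono) auto
  then show "N\<^sup>2 / (t - L) \<le> 4 * N\<^sup>2 * (L + 1)\<^sup>2 / (t + 1)"
    using tL tM M unfolding M_def by (simp add: field_simps)
  have "4 * N\<^sup>2 * M\<^sup>2 \<le> 4 * N\<^sup>2 * N\<^sup>2" using MN by (intro mult_left_mono) auto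
  then show "4 * N\<^sup>2 * (L + 1)\<^sup>2 / (t + 1) \<le> 4 * N ^ 4 / (t + 1)"
    using tM M unfolding M_def by (intro divide_right_mono) (auto simp: power4_eq_xxxx power2_eq_square)
qed

lemma inner_orthogonal_le_onorm_shift:
  assumes "bounded_linear H" and "inner u v = 0"
  shows "- (onorm (\<lambda>x. H x + x) * norm u * norm v) \<le> inner (H u) v"
proof -
  have "inner (H u) v = inner (H u + u) v" using assms(2) by (simp add: inner_add_left)
  moreover have "\<bar>inner (H u + u) v\<bar> \<le> norm (H u + u) * norm v" by (rule Cauchy_Schwarz_ineq2)
  moreover have "norm (H u + u) \<le> onorm (\<lambda>x. H x + x) * norm u"
    using assms(1) by (intro onorm bounded_linear_add bounded_linear_ident)
  then have "norm (H u + u) * norm v \<le> onorm (\<lambda>x. H x + x) * norm u * norm v"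
    by (intro mult_right_mono) auto
  ultimately show ?thesis by linarith
qed

locale compression =
  fixes S :: "'a::{real_inner,complete_space} set" and P H :: "'a \<Rightarrow> 'a"
  assumes closed_S: "closed S" and subspace_S: "subspace S" and nontrivial: "S \<noteq> {0}"
    and orth_proj: "is_orth_proj S P" and selfadjoint: "selfadjoint_op H"
begin

abbreviation lambda_infty :: real where
  "lambda_infty \<equiv> Inf (spectrum_on S (\<lambda>x. P (H x)))"

text \<open>lambda_pen t is the lambda_t of the paper: Q* Q = 1 - P, so H_t = H + t (1 - P).\<close>

abbreviation lambda_pen :: "real \<Rightarrow> real" where
  "lambda_pen t \<equiv> Inf (spectrum_on UNIV (\<lambda>x. H x + t *\<^sub>R (x - P x)))"

lemma bounded_linear_H: "bounded_linear H"
  and H_symmetric: "inner (H x) y = inner x (H y)"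
  using selfadjoint by (auto simp: selfadjoint_op_def)

lemma compressed: "symmetric_operator_on S (\<lambda>x. P (H x))"
proof (rule symmetric_operator_on.intro)
  show "bounded_linear (\<lambda>x. P (H x))"
    using bounded_linear_compose[OF bounded_linear_orth_proj[OF subspace_S orth_proj] bounded_linear_H]
    by (simp add: o_def)
  show "inner (P (H x)) y = inner x (P (H y))" if "x \<in> S" "y \<in> S" for x y
    using that H_symmetric orth_proj_inner[OF subspace_S orth_proj] by (metis inner_commute)
qed (use closed_S subspace_S orth_proj_in[OF subspace_S orth_proj] in auto)

lemma penalized: "symmetric_operator_on UNIV (\<lambda>x. H x + t *\<^sub>R (x - P x))"
proof (rule symmetric_operator_on.intro)
  show "bounded_linear (\<lambda>x. H x + t *\<^sub>R (x - P x))"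
    using bounded_linear_H bounded_linear_orth_proj[OF subspace_S orth_proj]
    by (intro bounded_linear_add bounded_linear_const_scaleR bounded_linear_sub bounded_linear_ident)
  show "inner (H x + t *\<^sub>R (x - P x)) y = inner x (H y + t *\<^sub>R (y - P y))" for x y
    using H_symmetric[of x y] orth_proj_symmetric[OF subspace_S orth_proj, of x y]
    by (simp add: inner_add_left inner_add_right inner_diff_left inner_diff_right inner_commute)
qed auto

lemma UNIV_nontrivial: "(UNIV :: 'a set) \<noteq> {0}"
  using nontrivial subspace_0[OF subspace_S] by auto

lemma lambda_pen_le_lambda_infty: "lambda_pen t \<le> lambda_infty"
proof (rule symmetric_operator_on.le_Inf_spectrum_on[OF compressed nontrivial])
  fix x assume x: "x \<in> S"
  have "lambda_pen t * (norm x)\<^sup>2 \<le> inner (H x + t *\<^sub>R (x - P x)) x"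
    by (rule symmetric_operator_on.Inf_spectrum_on_le_quadratic_form[OF penalized UNIV_nontrivial])
      simp
  also have "\<dots> = inner (P (H x)) x"
    using x orth_proj_fixes[OF subspace_S orth_proj] orth_proj_inner[OF subspace_S orth_proj] by simp
  finally show "lambda_pen t * (norm x)\<^sup>2 \<le> inner (P (H x)) x" .
qed

end

locale nonneg_compression = compression +
  assumes H_nonneg: "\<And>x. 0 \<le> inner (H x) x"
begin

lemma lambda_infty_le_quadratic_form: "x \<in> S \<Longrightarrow> lambda_infty * (norm x)\<^sup>2 \<le> inner (H x) x"
  using symmetric_operator_on.Inf_spectrum_on_le_quadratic_form[OF compressed nontrivial]
    orth_proj_inner[OF subspace_S orth_proj] by simp

lemma lambda_infty_nonneg: "0 \<le> lambda_infty"
  using H_nonneg orth_proj_inner[OF subspace_S orth_proj]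
  by (intro symmetric_operator_on.le_Inf_spectrum_on[OF compressed nontrivial]) simp

lemma lambda_infty_plus_one_le_onorm: "lambda_infty + 1 \<le> onorm (\<lambda>x. H x + x)"
proof -
  obtain u where u: "u \<in> S" "norm u = 1"
    using symmetric_operator_on.numerical_range_nonempty[OF compressed nontrivial]
    by (auto simp: numerical_range_def)
  moreover have "inner u u = 1" using u(2) by (simp add: power2_norm_eq_inner[symmetric])
  ultimately have "lambda_infty + 1 \<le> inner (H u + u) u"
    using lambda_infty_le_quadratic_form[OF u(1)] by (simp add: inner_add_left)
  also have "\<dots> \<le> norm (H u + u) * norm u" by (rule norm_cauchy_schwarz)
  also have "\<dots> \<le> onorm (\<lambda>x. H x + x)"
    using onorm[OF bounded_linear_add[OF bounded_linear_H bounded_linear_ident], of u] u(2) by simp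
  finally show ?thesis .
qed

lemma penalized_form_lower_bound:
  assumes gap: "t - lambda_infty > 0"
  shows "(lambda_infty - (onorm (\<lambda>x. H x + x))\<^sup>2 / (t - lambda_infty)) * (norm x)\<^sup>2
    \<le> inner (H x + t *\<^sub>R (x - P x)) x"
proof -
  define N where "N = onorm (\<lambda>x. H x + x)"
  define u v where "u = P x" and "v = x - P x"
  have u: "u \<in> S" and v: "v \<in> orthogonal_comp S"
    unfolding u_def v_def using orth_proj_in orth_proj_residual subspace_S orth_proj by auto
  then have uv: "inner u v = 0" by (auto simp: orthogonal_comp_def orthogonal_def)
  have x: "x = u + v" by (simp add: u_def v_def)
  have norm_x: "(norm x)\<^sup>2 = (norm u)\<^sup>2 + (norm v)\<^sup>2"
    unfolding x using uv by (simp add: power2_norm_eq_inner inner_add_left inner_add_right inner_commute)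
  have "inner (H x + t *\<^sub>R (x - P x)) x = inner (H (u + v)) (u + v) + t * inner v (u + v)"
    unfolding v_def[symmetric] x[symmetric] by (simp add: inner_add_left)
  also have "\<dots> = inner (H u) u + 2 * inner (H u) v + inner (H v) v + t * (norm v)\<^sup>2"
    using uv H_symmetric[of v u]
    by (simp add: linear_add bounded_linear.linear[OF bounded_linear_H] inner_add_left
        inner_add_right inner_commute power2_norm_eq_inner)
  finally have form: "inner (H x + t *\<^sub>R (x - P x)) x
      = inner (H u) u + 2 * inner (H u) v + inner (H v) v + t * (norm v)\<^sup>2" .
  have "(lambda_infty - N\<^sup>2 / (t - lambda_infty)) * ((norm u)\<^sup>2 + (norm v)\<^sup>2)
      \<le> lambda_infty * (norm u)\<^sup>2 - 2 * N * norm u * norm v + t * (norm v)\<^sup>2"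
    using quadratic_form_2x2_lower_bound[OF gap, of lambda_infty N "norm u" "norm v"] by simp
  moreover have "lambda_infty * (norm u)\<^sup>2 \<le> inner (H u) u" by (rule lambda_infty_le_quadratic_form[OF u])
  moreover have "- (N * norm u * norm v) \<le> inner (H u) v"
    unfolding N_def by (rule inner_orthogonal_le_onorm_shift[OF bounded_linear_H uv])
  moreover have "0 \<le> inner (H v) v" by (rule H_nonneg)
  ultimately show ?thesis unfolding norm_x form N_def[symmetric] by linarith
qed

lemma lambda_pen_lower_bound:
  assumes "t - lambda_infty > 0"
  shows "lambda_infty - (onorm (\<lambda>x. H x + x))\<^sup>2 / (t - lambda_infty) \<le> lambda_pen t"
  using penalized_form_lower_bound[OF assms]
  by (intro symmetric_operator_on.le_Inf_spectrum_on[OF penalized UNIV_nontrivial])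

end

theorem corollary4p4:
  fixes H1 :: "'a::{real_inner, complete_space} set"
    and P Q H :: "'a \<Rightarrow> 'a"
  assumes "closed H1" and "subspace H1"
    and "H1 \<noteq> {0}" and "H1 \<noteq> UNIV"
    and "is_orth_proj H1 P"
    and "is_orth_proj (orthogonal_comp H1) Q"
    and "selfadjoint_op H"
    and "\<forall>x. inner (H x) x \<ge> 0"
  shows "(\<forall>t::real. t \<ge> 0 \<longrightarrow>
            Inf (spectrum_on H1 (\<lambda>x. P (H x)))
              \<ge> Inf (spectrum_on UNIV (\<lambda>x. H x + t *\<^sub>R Q x)))
       \<and> (\<forall>t::real. t \<ge> 2 * (onorm (\<lambda>x. H x + x))\<^sup>2 \<longrightarrow>
            Inf (spectrum_on UNIV (\<lambda>x. H x + t *\<^sub>R Q x))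
              \<ge> Inf (spectrum_on H1 (\<lambda>x. P (H x)))
                 - 4 * (onorm (\<lambda>x. H x + x))\<^sup>2
                     * (Inf (spectrum_on H1 (\<lambda>x. P (H x))) + 1)\<^sup>2 / (t + 1)
          \<and> Inf (spectrum_on H1 (\<lambda>x. P (H x)))
                 - 4 * (onorm (\<lambda>x. H x + x))\<^sup>2
                     * (Inf (spectrum_on H1 (\<lambda>x. P (H x))) + 1)\<^sup>2 / (t + 1)
              \<ge> Inf (spectrum_on H1 (\<lambda>x. P (H x)))
                 - 4 * (onorm (\<lambda>x. H x + x)) ^ 4 / (t + 1))"
proof -
  interpret nonneg_compression H1 P H
    using assms by unfold_locales auto
  have Q: "(\<lambda>x. H x + t *\<^sub>R Q x) = (\<lambda>x. H x + t *\<^sub>R (x - P x))" for t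
    using orth_proj_orthogonal_comp[OF assms(2,5,6)] by simp
  note estimates = penalty_error_estimates[OF lambda_infty_nonneg lambda_infty_plus_one_le_onorm]
  show ?thesis
    unfolding Q
  proof (intro conjI allI impI)
    fix t :: real
    show "lambda_pen t \<le> lambda_infty" by (rule lambda_pen_le_lambda_infty)
  next
    fix t :: real
    assume t: "2 * (onorm (\<lambda>x. H x + x))\<^sup>2 \<le> t"
    show "lambda_infty - 4 * (onorm (\<lambda>x. H x + x))\<^sup>2 * (lambda_infty + 1)\<^sup>2 / (t + 1)
        \<le> lambda_pen t"
      using lambda_pen_lower_bound[OF estimates(1)[OF t]] estimates(2)[OF t] by linarith
    show "lambda_infty - 4 * onorm (\<lambda>x. H x + x) ^ 4 / (t + 1)
        \<le> lambda_infty - 4 * (onorm (\<lambda>x. H x + x))\<^sup>2 * (lambda_infty + 1)\<^sup>2 / (t + 1)"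
      using estimates(3)[OF t] by linarith
  qed
qed

end
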